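(* Let $d\ge3$ and $\varepsilon\in(0,1]$. Then $$P(\varepsilon,\mathcal C_d,\|\cdot\|_{L^1})\le N_{[\,]}(\varepsilon,\mathcal C_d,\|\cdot\|_{L^1})\le\frac{d^d}{d!}\Big(\frac1\varepsilon-\frac12\Big(1-\frac3d\Big)\Big)^d\le\frac{d^d}{d!}\,\varepsilon^{-d}.$$
   Context: Let $I^d=[0,1)^d$ and $\lambda^d$ be Lebesgue measure; all norms are in $L^1(I^d,\lambda^d)$. For $x\in I^d$ let $[0,x)=\prod_{i=1}^d[0,x_i)$, and let $\mathcal C_d=\{1_{[0,x)}: x\in I^d\}$ be the set of indicator functions of anchored boxes. For functions $\ell,u\in L^1$, the bracket $[\ell,u]$ is $\{f\in L^1:\ell\le f\le u\text{ pointwise}\}$; it is an $\varepsilon$-bracket if $\|u-\ell\|_{L^1}\le\varepsilon$. The bracketing number $N_{[\,]}(\varepsilon,\mathcal F,\|\cdot\|_{L^1})$ is the minimal number of $\varepsilon$-brackets whose union contains $\mathcal F$. A set $\mathcal S$ is $\varepsilon$-separated if $\|f-g\|_{L^1}>\varepsilon$ for all distinct $f,g\in\mathcal S$, and the packing number $P(\varepsilon,\mathcal F,\|\cdot\|_{L^1})$ is the maximal cardinality of an $\varepsilon$-separated subset of $\mathcal F$. *)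

theory Defs
  imports "HOL-Analysis.Analysis"
begin

text \<open>Dimension d = CARD('n); points of R^d are vectors real^'n.\<close>

definition unit_cube :: "(real^'n) set" where
  "unit_cube = {x. \<forall>i. 0 \<le> x$i \<and> x$i < 1}"

definition anchored_box :: "real^'n \<Rightarrow> (real^'n) set" where
  "anchored_box x = {y. \<forall>i. 0 \<le> y$i \<and> y$i < x$i}"

definition Cd :: "(real^'n \<Rightarrow> real) set" where
  "Cd = {indicator (anchored_box x) | x. x \<in> unit_cube}"

definition L1 :: "(real^'n \<Rightarrow> real) set" where
  "L1 = {f. integrable (lebesgue_on unit_cube) f}"

definition L1_norm :: "(real^'n \<Rightarrow> real) \<Rightarrow> real" where
  "L1_norm f = integral\<^sup>L (lebesgue_on unit_cube) (\<lambda>x. \<bar>f x\<bar>)"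

definition bracket :: "(real^'n \<Rightarrow> real) \<Rightarrow> (real^'n \<Rightarrow> real) \<Rightarrow> (real^'n \<Rightarrow> real) set" where
  "bracket l u = {f. f \<in> L1 \<and> (\<forall>x\<in>unit_cube. l x \<le> f x \<and> f x \<le> u x)}"

definition eps_bracket :: "real \<Rightarrow> (real^'n \<Rightarrow> real) \<Rightarrow> (real^'n \<Rightarrow> real) \<Rightarrow> bool" where
  "eps_bracket \<epsilon> l u \<longleftrightarrow> l \<in> L1 \<and> u \<in> L1 \<and> L1_norm (\<lambda>x. u x - l x) \<le> \<epsilon>"

text \<open>Bracketing number (value \<infinity> if no finite cover exists).\<close>
definition bracketing_number :: "real \<Rightarrow> (real^'n \<Rightarrow> real) set \<Rightarrow> ereal" where
  "bracketing_number \<epsilon> F = Inf {ereal (real (card B)) | B.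
      finite B \<and> (\<forall>(l,u)\<in>B. eps_bracket \<epsilon> l u) \<and> F \<subseteq> (\<Union>(l,u)\<in>B. bracket l u)}"

definition eps_separated :: "real \<Rightarrow> (real^'n \<Rightarrow> real) set \<Rightarrow> bool" where
  "eps_separated \<epsilon> S \<longleftrightarrow> (\<forall>f\<in>S. \<forall>g\<in>S. f \<noteq> g \<longrightarrow> L1_norm (\<lambda>x. f x - g x) > \<epsilon>)"

definition packing_number :: "real \<Rightarrow> (real^'n \<Rightarrow> real) set \<Rightarrow> ereal" where
  "packing_number \<epsilon> F = Sup {ereal (real (card S)) | S.
      finite S \<and> S \<subseteq> F \<and> eps_separated \<epsilon> S}"

end

theory Submission
  imports Defs
begin

text \<open>
  Two functions in a common \<open>\<epsilon>\<close>-bracket are \<open>\<epsilon>\<close>-close, so an \<open>\<epsilon>\<close>-separated set meets every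
  bracket at most once.

  For the upper bound fix \<open>m = \<lceil>d/\<epsilon>\<rceil>\<close>. By induction on the number of coordinates one
  builds at most \<open>m choose d\<close> pairs \<open>a \<le> b\<close> of corners in \<open>[0,1]\<^sup>d\<close> such that every point
  of \<open>[0,1]\<^sup>d\<close> lies between some \<open>a\<close> and \<open>b\<close> and \<open>\<Prod>b - \<Prod>a \<le> d/m\<close>: the new coordinate is
  cut into the slabs \<open>[k/m, (k+1)/m]\<close>, \<open>k \<ge> c\<close> (the first one extended down to 0), and on
  slab \<open>k\<close> the pairs built for \<open>c\<close> coordinates with parameter \<open>k\<close> are used; summing
  \<open>k choose c\<close> over \<open>k < m\<close> gives \<open>m choose (c+1)\<close>. The indicators of \<open>[0,a)\<close> and
  \<open>[0,b]\<close> then form an \<open>\<epsilon>\<close>-bracket around every anchored box in between, and AM-GM applied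
  to \<open>m (m-1) \<dots> (m-d+1)\<close> bounds \<open>m choose d\<close>.
\<close>

section \<open>Packing numbers are bounded by bracketing numbers\<close>

lemma L1_norm_diff_le_bracket_width:
  fixes f g l u :: "real^'n \<Rightarrow> real"
  assumes "f \<in> bracket l u" "g \<in> bracket l u" "eps_bracket \<epsilon> l u"
  shows "L1_norm (\<lambda>x. f x - g x) \<le> \<epsilon>"
proof -
  have L1: "f \<in> L1" "g \<in> L1" "l \<in> L1" "u \<in> L1"
    and width: "L1_norm (\<lambda>x. u x - l x) \<le> \<epsilon>"
    and between: "\<forall>x\<in>unit_cube. l x \<le> f x \<and> f x \<le> u x" "\<forall>x\<in>unit_cube. l x \<le> g x \<and> g x \<le> u x"
    using assms by (auto simp: bracket_def eps_bracket_def)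
  have "L1_norm (\<lambda>x. f x - g x) \<le> L1_norm (\<lambda>x. u x - l x)"
    unfolding L1_norm_def
  proof (rule integral_mono)
    show "integrable (lebesgue_on unit_cube) (\<lambda>x. \<bar>f x - g x\<bar>)"
      "integrable (lebesgue_on unit_cube) (\<lambda>x. \<bar>u x - l x\<bar>)"
      using L1 by (auto intro!: integrable_abs integrable_diff simp: L1_def)
    fix x :: "real^'n" assume "x \<in> space (lebesgue_on unit_cube)"
    then show "\<bar>f x - g x\<bar> \<le> \<bar>u x - l x\<bar>"
      using between by (fastforce simp: space_restrict_space)
  qed
  with width show ?thesis by simp
qed

lemma card_separated_le_card_brackets:
  assumes S: "finite S" "S \<subseteq> F" "eps_separated \<epsilon> S"
    and B: "finite B" "\<forall>(l,u)\<in>B. eps_bracket \<epsilon> l u" "F \<subseteq> (\<Union>(l,u)\<in>B. bracket l u)"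
  shows "card S \<le> card B"
proof -
  obtain br where br: "\<And>f. f \<in> S \<Longrightarrow> br f \<in> B \<and> f \<in> bracket (fst (br f)) (snd (br f))"
    using S(2) B(3) by (metis (mono_tags, lifting) UN_iff case_prod_beta subsetD)
  have "inj_on br S"
  proof (rule inj_onI, rule ccontr)
    fix f g assume fg: "f \<in> S" "g \<in> S" "br f = br g" "f \<noteq> g"
    have "eps_bracket \<epsilon> (fst (br f)) (snd (br f))"
      using br[OF fg(1)] B(2) by auto
    then have "L1_norm (\<lambda>x. f x - g x) \<le> \<epsilon>"
      using L1_norm_diff_le_bracket_width br[OF fg(1)] br[OF fg(2)] fg(3) by metis
    moreover have "L1_norm (\<lambda>x. f x - g x) > \<epsilon>"
      using S(3) fg unfolding eps_separated_def by blast
    ultimately show False by simp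
  qed
  then have "card S = card (br ` S)" by (simp add: card_image)
  also have "\<dots> \<le> card B" using br B(1) by (intro card_mono) auto
  finally show ?thesis .
qed

lemma packing_number_le_bracketing_number:
  "packing_number \<epsilon> F \<le> bracketing_number \<epsilon> F"
  unfolding packing_number_def bracketing_number_def
  using card_separated_le_card_brackets
  by (fastforce intro!: Sup_least Inf_greatest)

section \<open>A cover of the unit cube by pairs of corners\<close>

definition vector_update :: "real^'n \<Rightarrow> 'n \<Rightarrow> real \<Rightarrow> real^'n" where
  "vector_update v j t = (\<chi> i. if i = j then t else v$i)"

lemma prod_vector_update:
  "finite I \<Longrightarrow> j \<notin> I \<Longrightarrow> (\<Prod>i\<in>insert j I. vector_update v j t $ i) = t * (\<Prod>i\<in>I. v$i)"
  by (auto simp: vector_update_def intro!: prod.cong)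

definition corner_cover :: "'n set \<Rightarrow> nat \<Rightarrow> ((real^'n) \<times> (real^'n)) set \<Rightarrow> bool" where
  "corner_cover I m B \<longleftrightarrow> finite B \<and> card B \<le> m choose card I \<and>
     (\<forall>(a,b)\<in>B. (\<forall>i\<in>I. 0 \<le> a$i \<and> a$i \<le> b$i \<and> b$i \<le> 1)
        \<and> (\<Prod>i\<in>I. b$i) - (\<Prod>i\<in>I. a$i) \<le> real (card I) / real m) \<and>
     (\<forall>x. (\<forall>i\<in>I. 0 \<le> x$i \<and> x$i \<le> 1) \<longrightarrow> (\<exists>(a,b)\<in>B. \<forall>i\<in>I. a$i \<le> x$i \<and> x$i \<le> b$i))"

definition slab_lower :: "nat \<Rightarrow> nat \<Rightarrow> nat \<Rightarrow> real" where
  "slab_lower c m k = (if k = c then 0 else real k / real m)"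

definition slab_upper :: "nat \<Rightarrow> nat \<Rightarrow> real" where
  "slab_upper m k = real (k + 1) / real m"

lemma slab_bounds:
  assumes "c \<le> k" "k < m"
  shows "0 \<le> slab_lower c m k" "slab_lower c m k \<le> slab_upper m k" "slab_upper m k \<le> 1"
  using assms by (auto simp: slab_lower_def slab_upper_def divide_right_mono)

lemma slabs_cover_unit_interval:
  assumes "c < m" "0 \<le> t" "t \<le> 1"
  obtains k where "k \<in> {c..<m}" "slab_lower c m k \<le> t" "t \<le> slab_upper m k"
proof -
  define k where "k = max c (min (m - 1) (nat \<lfloor>t * m\<rfloor>))"
  have m: "real m > 0" using assms by simp
  have floor: "real (nat \<lfloor>t * m\<rfloor>) \<le> t * m" "t * m < real (nat \<lfloor>t * m\<rfloor>) + 1"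
    using assms by (auto simp: of_nat_nat)
  have "t * m \<le> m" using assms m by (simp add: mult_left_le_one_le)
  moreover have "real (nat \<lfloor>t * m\<rfloor>) \<le> real k \<or> real m \<le> real k + 1"
    using assms by (auto simp: k_def min_def max_def of_nat_diff)
  ultimately have "t * m \<le> real k + 1" using floor by linarith
  then have "t \<le> slab_upper m k" using m by (simp add: slab_upper_def field_simps)
  moreover have "slab_lower c m k \<le> t"
  proof (cases "k = c")
    case False
    then have "real k \<le> t * m" using floor by (auto simp: k_def)
    with False m show ?thesis by (simp add: slab_lower_def field_simps)
  qed (use assms in \<open>simp add: slab_lower_def\<close>)
  moreover have "k \<in> {c..<m}" using assms by (auto simp: k_def)
  ultimately show ?thesis using that by blast
qed

text \<open>For \<open>k > c\<close>: \<open>(k+1) PB - k PA = k (PB - PA) + PB \<le> c + 1\<close>.\<close>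
lemma slab_width_bound:
  fixes PA PB :: real
  assumes "PB \<le> 1" "PB - PA \<le> real c / real k" "c \<le> k" "k < m"
  shows "slab_upper m k * PB - slab_lower c m k * PA \<le> real (c + 1) / real m"
proof (cases "k = c")
  case True
  have "slab_upper m k * PB \<le> slab_upper m k"
    using assms slab_bounds[of c k m] by (simp add: mult_left_le)
  with True show ?thesis by (simp add: slab_lower_def slab_upper_def)
next
  case False
  with assms have k: "real k > 0" by simp
  have "real k * (PB - PA) \<le> real c"
    using assms(2) k by (simp add: field_simps)
  then have "real (k + 1) * PB - real k * PA \<le> real (c + 1)"
    using assms(1) by (simp add: algebra_simps)
  then have "(real (k + 1) * PB - real k * PA) / real m \<le> real (c + 1) / real m"
    by (simp add: divide_right_mono)
  with False show ?thesis by (simp add: slab_lower_def slab_upper_def diff_divide_distrib)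
qed

definition stack_slabs ::
    "'n \<Rightarrow> nat \<Rightarrow> nat \<Rightarrow> (nat \<Rightarrow> ((real^'n) \<times> (real^'n)) set) \<Rightarrow> ((real^'n) \<times> (real^'n)) set" where
  "stack_slabs j c m B = (\<Union>k\<in>{c..<m}.
     (\<lambda>(a,b). (vector_update a j (slab_lower c m k), vector_update b j (slab_upper m k))) ` B k)"

lemma card_stack_slabs:
  assumes "c < m" "\<And>k. k \<in> {c..<m} \<Longrightarrow> finite (B k) \<and> card (B k) \<le> k choose c"
  shows "finite (stack_slabs j c m B)" "card (stack_slabs j c m B) \<le> m choose (c + 1)"
proof -
  show "finite (stack_slabs j c m B)" using assms by (simp add: stack_slabs_def)
  have "card (stack_slabs j c m B) \<le> (\<Sum>k\<in>{c..<m}. card (B k))"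
    unfolding stack_slabs_def
    by (rule order_trans[OF card_UN_le sum_mono]) (auto intro: card_image_le simp: assms)
  also have "\<dots> \<le> (\<Sum>k\<in>{c..<m}. k choose c)" using assms by (intro sum_mono) auto
  also have "\<dots> \<le> (\<Sum>k\<le>m - 1. k choose c)" by (rule sum_mono2) auto
  also have "\<dots> = m choose (c + 1)" using sum_choose_upper[of c "m - 1"] assms by simp
  finally show "card (stack_slabs j c m B) \<le> m choose (c + 1)" .
qed

lemma corner_cover_insert:
  assumes I: "finite I" "j \<notin> I" and m: "card I < m"
    and B: "\<And>k. k \<in> {card I..<m} \<Longrightarrow> corner_cover I k (B k)"
  shows "corner_cover (insert j I) m (stack_slabs j (card I) m B)"
proof -
  let ?c = "card I"
  have card_insert: "card (insert j I) = ?c + 1" using I by simp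
  have "finite (B k) \<and> card (B k) \<le> k choose ?c" if "k \<in> {?c..<m}" for k
    using B[OF that] by (simp add: corner_cover_def)
  note size = card_stack_slabs[OF m this, of j]
  have pairs: "(\<forall>i\<in>insert j I. 0 \<le> a'$i \<and> a'$i \<le> b'$i \<and> b'$i \<le> 1)
      \<and> (\<Prod>i\<in>insert j I. b'$i) - (\<Prod>i\<in>insert j I. a'$i) \<le> real (?c + 1) / real m"
    if pair: "(a', b') \<in> stack_slabs j ?c m B" for a' b'
  proof -
    obtain k a b where k: "k \<in> {?c..<m}" and ab: "(a, b) \<in> B k"
      and a': "a' = vector_update a j (slab_lower ?c m k)"
      and b': "b' = vector_update b j (slab_upper m k)"
      using pair unfolding stack_slabs_def by fast
    have corners: "\<forall>i\<in>I. 0 \<le> a$i \<and> a$i \<le> b$i \<and> b$i \<le> 1"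
      and width: "(\<Prod>i\<in>I. b$i) - (\<Prod>i\<in>I. a$i) \<le> real ?c / real k"
      using B[OF k] ab by (auto simp: corner_cover_def)
    have "(\<Prod>i\<in>I. b$i) \<le> 1" using corners by (intro prod_le_1) auto
    then have "(\<Prod>i\<in>insert j I. b'$i) - (\<Prod>i\<in>insert j I. a'$i) \<le> real (?c + 1) / real m"
      unfolding a' b' prod_vector_update[OF I] using slab_width_bound[OF _ width] k by simp
    moreover have "\<forall>i\<in>insert j I. 0 \<le> a'$i \<and> a'$i \<le> b'$i \<and> b'$i \<le> 1"
      using slab_bounds[of ?c k m] k corners I by (auto simp: a' b' vector_update_def)
    ultimately show ?thesis by blast
  qed
  have covers: "\<exists>(a', b')\<in>stack_slabs j ?c m B. \<forall>i\<in>insert j I. a'$i \<le> x$i \<and> x$i \<le> b'$i"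
    if x: "\<forall>i\<in>insert j I. 0 \<le> x$i \<and> x$i \<le> 1" for x
  proof -
    obtain k where k: "k \<in> {?c..<m}" "slab_lower ?c m k \<le> x$j" "x$j \<le> slab_upper m k"
      using slabs_cover_unit_interval[OF m] x by auto
    have "\<forall>i\<in>I. 0 \<le> x$i \<and> x$i \<le> 1" using x by simp
    then obtain a b where "(a, b) \<in> B k" "\<forall>i\<in>I. a$i \<le> x$i \<and> x$i \<le> b$i"
      using B[OF k(1)] unfolding corner_cover_def by blast
    with k show ?thesis
      unfolding stack_slabs_def
      by (intro bexI[of _ "(vector_update a j (slab_lower ?c m k), vector_update b j (slab_upper m k))"])
        (auto simp: vector_update_def)
  qed
  show ?thesis
    using size pairs covers unfolding corner_cover_def card_insert by blast
qed

lemma corner_cover_exists: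
  fixes I :: "'n::finite set"
  assumes "card I \<le> m"
  shows "\<exists>B. corner_cover I m B"
  using finite[of I] assms
proof (induction I arbitrary: m rule: finite_induct)
  case empty
  show ?case by (intro exI[of _ "{(0, 0)}"]) (auto simp: corner_cover_def)
next
  case (insert j I)
  then have "\<forall>k\<in>{card I..<m}. \<exists>B. corner_cover I k B" by auto
  then obtain B where "\<And>k. k \<in> {card I..<m} \<Longrightarrow> corner_cover I k (B k)" by metis
  moreover have "card I < m" using insert by simp
  ultimately show ?case using corner_cover_insert[OF insert(1,2)] by blast
qed

section \<open>Brackets from pairs of corners\<close>

lemma anchored_box_sets_lebesgue: "anchored_box (x::real^'n) \<in> sets lebesgue"
proof -
  have "anchored_box x = (\<Inter>i. {y::real^'n. y$i \<ge> 0} \<inter> {y. y$i < x$i})"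
    by (auto simp: anchored_box_def)
  also have "\<dots> \<in> sets borel"
    by (intro sets.finite_INT sets.Int borel_closed borel_open
        closed_halfspace_component_ge_cart open_halfspace_component_lt_cart) auto
  finally show ?thesis by (simp add: sets_completionI_sets)
qed

lemma unit_cube_lmeasurable: "(unit_cube::(real^'n) set) \<in> lmeasurable"
proof -
  have "unit_cube = anchored_box (1::real^'n)"
    by (auto simp: unit_cube_def anchored_box_def)
  moreover have "bounded (anchored_box (1::real^'n))"
    by (rule bounded_subset[OF bounded_cbox[of 0 1]])
      (auto simp: anchored_box_def mem_box_cart less_imp_le)
  ultimately show ?thesis
    by (metis anchored_box_sets_lebesgue bounded_set_imp_lmeasurable)
qed

lemma indicator_in_L1:
  assumes "A \<in> sets lebesgue"
  shows "(indicator A :: real^'n \<Rightarrow> real) \<in> L1"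
proof -
  interpret finite_measure "lebesgue_on (unit_cube::(real^'n) set)"
    by (rule finite_measure_lebesgue_on[OF unit_cube_lmeasurable])
  have "integrable (lebesgue_on unit_cube) (indicator A :: real^'n \<Rightarrow> real)"
    using assms
    by (intro integrable_const_bound[where B=1] measurable_restrict_space1)
      (auto simp: indicator_def)
  then show ?thesis by (simp add: L1_def)
qed

lemma measure_box_origin:
  assumes "\<forall>i. 0 \<le> (a::real^'n)$i"
  shows "measure lebesgue (box 0 a) = (\<Prod>i\<in>UNIV. a$i)"
    and "measure lebesgue (cbox 0 a) = (\<Prod>i\<in>UNIV. a$i)"
proof -
  have "0 \<in> cbox 0 a" using assms by (simp add: mem_box_cart)
  then have "cbox 0 a \<noteq> {}" by blast
  then have "measure lborel (cbox 0 a) = (\<Prod>i\<in>UNIV. a$i)"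
    using content_cbox_cart[of 0 a] by simp
  moreover have "measure lborel (box 0 a) = measure lborel (cbox 0 a)"
    by (simp only: measure_lborel_box_eq measure_lborel_cbox_eq)
  ultimately show "measure lebesgue (box 0 a) = (\<Prod>i\<in>UNIV. a$i)"
    and "measure lebesgue (cbox 0 a) = (\<Prod>i\<in>UNIV. a$i)"
    by simp_all
qed

lemma eps_bracket_corners:
  assumes "\<forall>i. 0 \<le> (a::real^'n)$i \<and> a$i \<le> b$i"
    and "(\<Prod>i\<in>UNIV. b$i) - (\<Prod>i\<in>UNIV. a$i) \<le> \<epsilon>"
  shows "eps_bracket \<epsilon> (indicator (box 0 a)) (indicator (cbox 0 b))"
proof -
  define D where "D = cbox 0 b - box 0 a"
  have sub: "box 0 a \<subseteq> cbox 0 b"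
    using assms by (auto simp: mem_box_cart) (meson less_eq_real_def order_trans)+
  have "(\<lambda>y. \<bar>indicator (cbox 0 b) y - indicator (box 0 a) y\<bar>) = (indicator D :: _ \<Rightarrow> real)"
    using sub by (auto simp: D_def indicator_def fun_eq_iff)
  then have "L1_norm (\<lambda>y. indicator (cbox 0 b) y - indicator (box 0 a) y)
      = measure (lebesgue_on unit_cube) (D \<inter> unit_cube)"
    by (simp add: L1_norm_def space_restrict_space)
  also have "\<dots> = measure lebesgue (D \<inter> unit_cube)"
    using unit_cube_lmeasurable by (intro measure_restrict_space) auto
  also have "\<dots> \<le> measure lebesgue D"
    using unit_cube_lmeasurable by (intro measure_mono_fmeasurable) (auto simp: D_def)
  also have "\<dots> = measure lebesgue (cbox 0 b) - measure lebesgue (box 0 a)"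
    unfolding D_def using sub lmeasurable_cbox[of 0 b] lmeasurable_box[of 0 a]
    by (intro measure_Diff) (auto simp: fmeasurable_def simp del: emeasure_completion)
  also have "\<dots> = (\<Prod>i\<in>UNIV. b$i) - (\<Prod>i\<in>UNIV. a$i)"
    using measure_box_origin[of a] measure_box_origin[of b] assms by (metis order_trans)
  finally show ?thesis
    using assms by (auto simp: eps_bracket_def intro!: indicator_in_L1)
qed

lemma anchored_box_in_corner_bracket:
  assumes "\<forall>i. a$i \<le> (x::real^'n)$i \<and> x$i \<le> b$i"
  shows "indicator (anchored_box x) \<in> bracket (indicator (box 0 a)) (indicator (cbox 0 b))"
proof -
  have "box 0 a \<subseteq> anchored_box x" "anchored_box x \<subseteq> cbox 0 b"
    using assms by (auto simp: mem_box_cart anchored_box_def) (meson less_le_trans less_imp_le order_trans)+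
  then show ?thesis
    using anchored_box_sets_lebesgue[of x]
    by (auto simp: bracket_def indicator_def intro!: indicator_in_L1)
qed

lemma bracketing_number_Cd_le_binomial:
  assumes "CARD('n::finite) \<le> m" "real CARD('n) / real m \<le> \<epsilon>"
  shows "bracketing_number \<epsilon> (Cd :: (real^'n \<Rightarrow> real) set) \<le> ereal (real (m choose CARD('n)))"
proof -
  obtain B :: "((real^'n) \<times> (real^'n)) set" where "corner_cover UNIV m B"
    using corner_cover_exists assms(1) by blast
  then have B: "finite B" "card B \<le> m choose CARD('n)"
    and pairs: "\<forall>(a, b)\<in>B. (\<forall>i. 0 \<le> a$i \<and> a$i \<le> b$i \<and> b$i \<le> 1)
        \<and> (\<Prod>i\<in>UNIV. b$i) - (\<Prod>i\<in>UNIV. a$i) \<le> real CARD('n) / real m"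
    and covers: "\<forall>x. (\<forall>i. 0 \<le> x$i \<and> x$i \<le> 1) \<longrightarrow> (\<exists>(a, b)\<in>B. \<forall>i. a$i \<le> x$i \<and> x$i \<le> b$i)"
    unfolding corner_cover_def by auto
  define BR :: "((real^'n \<Rightarrow> real) \<times> (real^'n \<Rightarrow> real)) set"
    where "BR = (\<lambda>(a, b). (indicator (box 0 a), indicator (cbox 0 b))) ` B"
  have "finite BR" unfolding BR_def using B(1) by simp
  moreover have "card BR \<le> m choose CARD('n)"
    unfolding BR_def using card_image_le[OF B(1)] B(2) le_trans by blast
  moreover have "\<forall>(l, u)\<in>BR. eps_bracket \<epsilon> l u"
    unfolding BR_def using pairs assms(2) by (auto intro!: eps_bracket_corners)
  moreover have "Cd \<subseteq> (\<Union>(l, u)\<in>BR. bracket l u)"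
  proof
    fix f assume "f \<in> (Cd :: (real^'n \<Rightarrow> real) set)"
    then obtain x where f: "f = indicator (anchored_box x)" and "\<forall>i. 0 \<le> x$i \<and> x$i \<le> 1"
      by (auto simp: Cd_def unit_cube_def less_imp_le)
    then obtain a b where ab: "(a, b) \<in> B" "\<forall>i. a$i \<le> x$i \<and> x$i \<le> b$i"
      using covers by blast
    have "f \<in> bracket (indicator (box 0 a)) (indicator (cbox 0 b))"
      using ab(2) unfolding f by (rule anchored_box_in_corner_bracket)
    then show "f \<in> (\<Union>(l, u)\<in>BR. bracket l u)"
      unfolding BR_def using ab(1) by force
  qed
  ultimately have "bracketing_number \<epsilon> (Cd :: (real^'n \<Rightarrow> real) set) \<le> ereal (real (card BR))"
    unfolding bracketing_number_def by (intro Inf_lower) blast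
  also have "\<dots> \<le> ereal (real (m choose CARD('n)))" using \<open>card BR \<le> _\<close> by simp
  finally show ?thesis .
qed

section \<open>Estimating the binomial coefficient\<close>

lemma prod_le_mean_power:
  fixes x :: "nat \<Rightarrow> real"
  assumes "d > 0" "\<And>i. i < d \<Longrightarrow> x i \<ge> 0"
  shows "(\<Prod>i<d. x i) \<le> ((\<Sum>i<d. x i) / d) ^ d"
proof -
  define P where "P = (\<Prod>i<d. x i)"
  have "P \<ge> 0" unfolding P_def using assms by (intro prod_nonneg) auto
  have "(\<Sum>i<d. x i / card {..<d}) \<ge> P powr (1 / card {..<d})"
    unfolding P_def using assms by (intro arith_geom_mean) auto
  then have mean: "(\<Sum>i<d. x i) / d \<ge> P powr (1 / d)" by (simp add: sum_divide_distrib)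
  show ?thesis
  proof (cases "P = 0")
    case True
    have "(\<Sum>i<d. x i) / d \<ge> 0" using assms by (intro divide_nonneg_pos sum_nonneg) auto
    then show ?thesis unfolding P_def[symmetric] using True by (simp add: zero_le_power)
  next
    case False
    with \<open>P \<ge> 0\<close> have "P = (P powr (1 / d)) ^ d"
      using assms(1) by (simp add: powr_realpow[symmetric] powr_powr)
    also have "\<dots> \<le> ((\<Sum>i<d. x i) / d) ^ d"
      using mean by (intro power_mono) auto
    finally show ?thesis unfolding P_def .
  qed
qed

lemma gauss_sum_lessThan_real: "(\<Sum>i<d. real i) = real d * (real d - 1) / 2"
  by (induction d) (auto simp: field_simps)

lemma binomial_le_mean_power:
  assumes "0 < d" "d \<le> m"
  shows "real (m choose d) \<le> (real m - (real d - 1) / 2) ^ d / fact d"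
proof -
  have "real (m choose d) = (\<Prod>i<d. real m - real i) / fact d"
    by (simp add: binomial_gbinomial gbinomial_prod_rev atLeast0LessThan)
  moreover have "(\<Prod>i<d. real m - real i) \<le> ((\<Sum>i<d. real m - real i) / d) ^ d"
    using assms by (intro prod_le_mean_power) auto
  moreover have "(\<Sum>i<d. real m - real i) / d = real m - (real d - 1) / 2"
    using assms by (simp add: sum_subtractf gauss_sum_lessThan_real field_simps)
  ultimately show ?thesis by (simp add: divide_right_mono)
qed

lemma binomial_ceiling_bound:
  assumes d: "0 < d" and \<epsilon>: "0 < \<epsilon>" "\<epsilon> \<le> 1" and m_def: "m = nat \<lceil>real d / \<epsilon>\<rceil>"
  shows "real (m choose d) \<le> real d ^ d / fact d * (1 / \<epsilon> - 1/2 * (1 - 3 / real d)) ^ d"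
    and "d \<le> m" and "real d / real m \<le> \<epsilon>"
proof -
  define X where "X = 1 / \<epsilon> - 1/2 * (1 - 3 / real d)"
  have d_le: "real d \<le> real d / \<epsilon>" using d \<epsilon> by (simp add: field_simps)
  have m_ge: "real d / \<epsilon> \<le> real m" unfolding m_def by linarith
  have m_less: "real m < real d / \<epsilon> + 1" unfolding m_def using d_le by linarith
  show dm: "d \<le> m" using d_le m_ge by linarith
  show "real d / real m \<le> \<epsilon>" using m_ge d \<epsilon> dm by (simp add: field_simps)
  have "real d * X = real d / \<epsilon> - real d / 2 + 3 / 2"
    using d by (simp add: X_def field_simps)
  moreover have "real m - (real d - 1) / 2 = real m - real d / 2 + 1 / 2" by (simp add: field_simps)
  ultimately have "real m - (real d - 1) / 2 \<le> real d * X"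
    using m_less by linarith
  then have "(real m - (real d - 1) / 2) ^ d \<le> (real d * X) ^ d"
    using dm by (intro power_mono) auto
  then have "real (m choose d) \<le> (real d * X) ^ d / fact d"
    using binomial_le_mean_power[OF d dm] by (meson divide_right_mono fact_ge_zero order_trans)
  then show "real (m choose d) \<le> real d ^ d / fact d * X ^ d"
    by (simp add: power_mult_distrib)
qed

lemma bound_le_powr:
  assumes "3 \<le> d" "0 < \<epsilon>" "\<epsilon> \<le> 1"
  shows "real d ^ d / fact d * (1 / \<epsilon> - 1/2 * (1 - 3 / real d)) ^ d
           \<le> real d ^ d / fact d * \<epsilon> powr (- real d)"
proof -
  define c where "c = 1/2 * (1 - 3 / real d)"
  have "0 \<le> c" "c \<le> 1/2" "1 \<le> 1 / \<epsilon>"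
    using assms by (simp_all add: c_def field_simps)
  then have "(1 / \<epsilon> - c) ^ d \<le> (1 / \<epsilon>) ^ d"
    by (intro power_mono) linarith+
  also have "(1 / \<epsilon>) ^ d = \<epsilon> powr (- real d)"
    using assms by (simp add: powr_minus powr_realpow power_one_over inverse_eq_divide)
  finally show ?thesis unfolding c_def by (intro mult_left_mono) auto
qed

theorem mainTheorem5:
  fixes \<epsilon> :: real
  assumes "CARD('n::finite) \<ge> 3" and "0 < \<epsilon>" and "\<epsilon> \<le> 1"
  defines "d \<equiv> CARD('n)"
  shows "packing_number \<epsilon> (Cd :: (real^'n \<Rightarrow> real) set)
           \<le> bracketing_number \<epsilon> (Cd :: (real^'n \<Rightarrow> real) set)
       \<and> bracketing_number \<epsilon> (Cd :: (real^'n \<Rightarrow> real) set)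
           \<le> ereal (real d ^ d / fact d * (1 / \<epsilon> - 1/2 * (1 - 3 / real d)) ^ d)
       \<and> real d ^ d / fact d * (1 / \<epsilon> - 1/2 * (1 - 3 / real d)) ^ d
           \<le> real d ^ d / fact d * \<epsilon> powr (- real d)"
proof -
  define m where "m = nat \<lceil>real d / \<epsilon>\<rceil>"
  have "0 < d" by (simp add: d_def)
  note binomial = binomial_ceiling_bound[OF this assms(2,3) m_def]
  have "bracketing_number \<epsilon> (Cd :: (real^'n \<Rightarrow> real) set) \<le> ereal (real (m choose d))"
    using bracketing_number_Cd_le_binomial[OF binomial(2,3)[unfolded d_def]]
    by (simp add: d_def)
  also have "\<dots> \<le> ereal (real d ^ d / fact d * (1 / \<epsilon> - 1/2 * (1 - 3 / real d)) ^ d)"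
    using binomial(1) assms(2,3) by (simp add: d_def)
  finally show ?thesis
    using packing_number_le_bracketing_number bound_le_powr assms(1-3) unfolding d_def by blast
qed

end
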